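(* Let $\mathcal{A}$ be a Desargues affine plane, let $O\neq I$ be points, and let $\delta$ be a dilatation of $\mathcal{A}$. Equip $\ell^{OI}$ with the skew field structure with zero $O$ and unit $I$, and the line $\delta(\ell^{OI})$ with the skew field structure with zero $\delta(O)$ and unit $\delta(I)$. Then for all $A,B,C\in\ell^{OI}$ with $B\neq C$, \[ \delta(r(A,B;C))=r(\delta(A),\delta(B);\delta(C)), \] where the ratio on the left is computed in $\ell^{OI}$ and the ratio on the right in $\delta(\ell^{OI})$.
   Context: A Desargues affine plane is an incidence structure of points and lines in which any two distinct points lie on exactly one line, through a point not on a line $\ell$ there is exactly one line disjoint from $\ell$ (Playfair), there exist three non-collinear points, and Desargues' axiom holds: if $A,B,C,A',B',C'$ are points such that the pairwise distinct lines $AA',BB',CC'$ are either all parallel or all pass through one point, and $AB\parallel A'B'$, $BC\parallel B'C'$ (with $AB\neq A'B'$, $BC\neq B'C'$, $A\ne C$, $A'\ne C'$), then $AC\parallel A'C'$. Skew field on a line: for distinct points $O,I$ and points $A,B$ on the line $\ell^{OI}$, addition is defined by: choose a point $B_1\notin\ell^{OI}$; let $P_1$ be the intersection of the line through $B_1$ parallel to $\ell^{OI}$ with the line through $A$ parallel to $OB_1$; then $A+B$ is the intersection of $\ell^{OI}$ with the line through $P_1$ parallel to $BB_1$. Multiplication is defined by: choose $B_1\notin\ell^{OI}$; let $P_1$ be the intersection of the line through $A$ parallel to $IB_1$ with the line $OB_1$; then $A\cdot B$ is the intersection of $\ell^{OI}$ with the line through $P_1$ parallel to $BB_1$. These operations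 do not depend on the choice of $B_1$ and make $(\ell^{OI},+,\cdot)$ a skew field with zero $O$ and unit $I$; the same construction applies to any line with any chosen pair of distinct points as zero and unit. $-X$ and $X^{-1}$ denote additive and multiplicative inverses, $X-Y=X+(-Y)$. Ratio of three points on such a line: $r(A,B;C)=(B-C)^{-1}(A-C)$ for $B\neq C$. A dilatation of $\mathcal{A}$ is a collineation $\delta$ such that $\delta(P)\delta(Q)\parallel PQ$ for all points $P\neq Q$. *)

theory Defs
  imports Main
begin

text \<open>An incidence structure: the points are all elements of the type 'p,
  the lines are given by a set Ls of point sets.\<close>

definition line_of :: "'p set set \<Rightarrow> 'p \<Rightarrow> 'p \<Rightarrow> 'p set" where
  "line_of Ls P Q = (THE l. l \<in> Ls \<and> P \<in> l \<and> Q \<in> l)"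

definition parallel :: "'p set set \<Rightarrow> 'p set \<Rightarrow> 'p set \<Rightarrow> bool" where
  "parallel Ls l m \<longleftrightarrow> l \<in> Ls \<and> m \<in> Ls \<and> (l = m \<or> l \<inter> m = {})"

definition collinear :: "'p set set \<Rightarrow> 'p \<Rightarrow> 'p \<Rightarrow> 'p \<Rightarrow> bool" where
  "collinear Ls P Q R \<longleftrightarrow> (\<exists>l\<in>Ls. P \<in> l \<and> Q \<in> l \<and> R \<in> l)"

definition affine_plane :: "'p set set \<Rightarrow> bool" where
  "affine_plane Ls \<longleftrightarrow>
     (\<forall>l\<in>Ls. \<exists>P Q. P \<noteq> Q \<and> P \<in> l \<and> Q \<in> l) \<and>
     (\<forall>P Q. P \<noteq> Q \<longrightarrow> (\<exists>!l. l \<in> Ls \<and> P \<in> l \<and> Q \<in> l)) \<and>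
     (\<forall>P l. l \<in> Ls \<and> P \<notin> l \<longrightarrow> (\<exists>!m. m \<in> Ls \<and> P \<in> m \<and> m \<inter> l = {})) \<and>
     (\<exists>P Q R. \<not> collinear Ls P Q R)"

definition desargues_axiom :: "'p set set \<Rightarrow> bool" where
  "desargues_axiom Ls \<longleftrightarrow>
     (\<forall>A B C A' B' C'.
        A \<noteq> A' \<and> B \<noteq> B' \<and> C \<noteq> C' \<and> A \<noteq> B \<and> B \<noteq> C \<and> A' \<noteq> B' \<and> B' \<noteq> C' \<and>
        A \<noteq> C \<and> A' \<noteq> C' \<and>
        line_of Ls A A' \<noteq> line_of Ls B B' \<and> line_of Ls B B' \<noteq> line_of Ls C C' \<and>
        line_of Ls A A' \<noteq> line_of Ls C C' \<and>
        ((parallel Ls (line_of Ls A A') (line_of Ls B B') \<and>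
          parallel Ls (line_of Ls B B') (line_of Ls C C') \<and>
          parallel Ls (line_of Ls A A') (line_of Ls C C')) \<or>
         (\<exists>S. S \<in> line_of Ls A A' \<and> S \<in> line_of Ls B B' \<and> S \<in> line_of Ls C C')) \<and>
        parallel Ls (line_of Ls A B) (line_of Ls A' B') \<and>
        parallel Ls (line_of Ls B C) (line_of Ls B' C') \<and>
        line_of Ls A B \<noteq> line_of Ls A' B' \<and> line_of Ls B C \<noteq> line_of Ls B' C'
        \<longrightarrow> parallel Ls (line_of Ls A C) (line_of Ls A' C'))"

definition desargues_affine_plane :: "'p set set \<Rightarrow> bool" where
  "desargues_affine_plane Ls \<longleftrightarrow> affine_plane Ls \<and> desargues_axiom Ls"

definition par_through :: "'p set set \<Rightarrow> 'p \<Rightarrow> 'p set \<Rightarrow> 'p set" where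
  "par_through Ls P l = (THE m. m \<in> Ls \<and> P \<in> m \<and> parallel Ls m l)"

definition meet :: "'p set \<Rightarrow> 'p set \<Rightarrow> 'p" where
  "meet l m = (THE X. X \<in> l \<and> X \<in> m)"

text \<open>Skew field operations on the line through Oz and Iu (zero Oz, unit Iu).
  The auxiliary point B1 is an (arbitrary) chosen point off the line; the
  operations do not depend on this choice.\<close>
definition aux_pt :: "'p set set \<Rightarrow> 'p \<Rightarrow> 'p \<Rightarrow> 'p" where
  "aux_pt Ls Oz Iu = (SOME B1. B1 \<notin> line_of Ls Oz Iu)"

definition sf_add :: "'p set set \<Rightarrow> 'p \<Rightarrow> 'p \<Rightarrow> 'p \<Rightarrow> 'p \<Rightarrow> 'p" where
  "sf_add Ls Oz Iu A B =
    (let l = line_of Ls Oz Iu; B1 = aux_pt Ls Oz Iu;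
         P1 = meet (par_through Ls B1 l) (par_through Ls A (line_of Ls Oz B1))
     in meet l (par_through Ls P1 (line_of Ls B B1)))"

definition sf_mul :: "'p set set \<Rightarrow> 'p \<Rightarrow> 'p \<Rightarrow> 'p \<Rightarrow> 'p \<Rightarrow> 'p" where
  "sf_mul Ls Oz Iu A B =
    (let l = line_of Ls Oz Iu; B1 = aux_pt Ls Oz Iu;
         P1 = meet (par_through Ls A (line_of Ls Iu B1)) (line_of Ls Oz B1)
     in meet l (par_through Ls P1 (line_of Ls B B1)))"

definition sf_neg :: "'p set set \<Rightarrow> 'p \<Rightarrow> 'p \<Rightarrow> 'p \<Rightarrow> 'p" where
  "sf_neg Ls Oz Iu X = (THE Y. Y \<in> line_of Ls Oz Iu \<and> sf_add Ls Oz Iu X Y = Oz)"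

definition sf_inv :: "'p set set \<Rightarrow> 'p \<Rightarrow> 'p \<Rightarrow> 'p \<Rightarrow> 'p" where
  "sf_inv Ls Oz Iu X = (THE Y. Y \<in> line_of Ls Oz Iu \<and> sf_mul Ls Oz Iu X Y = Iu)"

definition sf_sub :: "'p set set \<Rightarrow> 'p \<Rightarrow> 'p \<Rightarrow> 'p \<Rightarrow> 'p \<Rightarrow> 'p" where
  "sf_sub Ls Oz Iu X Y = sf_add Ls Oz Iu X (sf_neg Ls Oz Iu Y)"

definition ratio :: "'p set set \<Rightarrow> 'p \<Rightarrow> 'p \<Rightarrow> 'p \<Rightarrow> 'p \<Rightarrow> 'p \<Rightarrow> 'p" where
  "ratio Ls Oz Iu A B C =
     sf_mul Ls Oz Iu (sf_inv Ls Oz Iu (sf_sub Ls Oz Iu B C)) (sf_sub Ls Oz Iu A C)"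

definition collineation :: "'p set set \<Rightarrow> ('p \<Rightarrow> 'p) \<Rightarrow> bool" where
  "collineation Ls f \<longleftrightarrow> bij f \<and> (\<forall>l. l \<in> Ls \<longleftrightarrow> f ` l \<in> Ls)"

definition dilatation :: "'p set set \<Rightarrow> ('p \<Rightarrow> 'p) \<Rightarrow> bool" where
  "dilatation Ls f \<longleftrightarrow> collineation Ls f \<and>
     (\<forall>P Q. P \<noteq> Q \<longrightarrow> parallel Ls (line_of Ls (f P) (f Q)) (line_of Ls P Q))"

end

theory Submission
  imports Defs
begin

(* The constructions of A + B and A B on the line OI are chains of three primitive steps
   (line through two points, parallel through a point, intersection of two lines) starting
   from an auxiliary point B1 off the line. A collineation preserves incidence, hence
   parallelism, so it carries each chain to the same chain for the frame delta O, delta I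
   with auxiliary point delta B1. By Desargues' axiom the result does not depend on the
   auxiliary point: two auxiliary points in general position are compared by two applications
   of the axiom to triangles in perspective from a pencil, badly placed ones through a third
   auxiliary point, and the affine plane of order 2 is checked directly. Hence delta is a
   homomorphism between the two skew fields; negatives and inverses are determined by their
   defining equations, and the ratio is built from these operations. *)

section \<open>Affine planes\<close>

locale affine_incidence =
  fixes Ls :: "'p set set"
  assumes affine_plane: "affine_plane Ls"
begin

lemma line_has_two_points: "l \<in> Ls \<Longrightarrow> \<exists>P Q. P \<noteq> Q \<and> P \<in> l \<and> Q \<in> l"
  using affine_plane unfolding affine_plane_def by (elim conjE) (rule bspec)

lemma ex1_line_through: "P \<noteq> Q \<Longrightarrow> \<exists>!l. l \<in> Ls \<and> P \<in> l \<and> Q \<in> l"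
  using affine_plane unfolding affine_plane_def by (elim conjE) (erule allE, erule allE, erule mp)

lemma playfair: "l \<in> Ls \<Longrightarrow> P \<notin> l \<Longrightarrow> \<exists>!m. m \<in> Ls \<and> P \<in> m \<and> m \<inter> l = {}"
  using affine_plane unfolding affine_plane_def
  by (elim conjE) (erule allE, erule allE, erule mp, rule conjI)

lemma exists_point_off_line: assumes "l \<in> Ls" shows "\<exists>P. P \<notin> l"
proof -
  obtain P Q R where "\<not> collinear Ls P Q R"
    using affine_plane unfolding affine_plane_def by (elim conjE exE)
  then show ?thesis using assms unfolding collinear_def by blast
qed

lemma line_of_commute: "line_of Ls P Q = line_of Ls Q P"
  unfolding line_of_def by (simp add: conj_commute)

lemma line_of_in [simp]: "P \<noteq> Q \<Longrightarrow> line_of Ls P Q \<in> Ls"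
  and left_in_line_of [simp]: "P \<noteq> Q \<Longrightarrow> P \<in> line_of Ls P Q"
  and right_in_line_of [simp]: "P \<noteq> Q \<Longrightarrow> Q \<in> line_of Ls P Q"
  using theI'[OF ex1_line_through] unfolding line_of_def by blast+

lemma line_of_eq: "l \<in> Ls \<Longrightarrow> P \<in> l \<Longrightarrow> Q \<in> l \<Longrightarrow> P \<noteq> Q \<Longrightarrow> line_of Ls P Q = l"
  unfolding line_of_def by (rule the1_equality[OF ex1_line_through]) auto

lemma lines_eq_if_two_common_points:
  "l \<in> Ls \<Longrightarrow> m \<in> Ls \<Longrightarrow> P \<in> l \<Longrightarrow> P \<in> m \<Longrightarrow> Q \<in> l \<Longrightarrow> Q \<in> m \<Longrightarrow> P \<noteq> Q \<Longrightarrow> l = m"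
  using line_of_eq by metis

lemma line_of_off_line_meets_once:
  "l \<in> Ls \<Longrightarrow> X \<in> l \<Longrightarrow> B \<notin> l \<Longrightarrow> Y \<in> l \<Longrightarrow> Y \<in> line_of Ls X B \<Longrightarrow> Y = X"
  by (metis left_in_line_of line_of_in lines_eq_if_two_common_points right_in_line_of)

lemma parallel_refl: "l \<in> Ls \<Longrightarrow> parallel Ls l l"
  unfolding parallel_def by auto

lemma parallel_sym: "parallel Ls l m \<Longrightarrow> parallel Ls m l"
  unfolding parallel_def by auto

lemma parallel_in: "parallel Ls l m \<Longrightarrow> l \<in> Ls" "parallel Ls l m \<Longrightarrow> m \<in> Ls"
  unfolding parallel_def by auto

lemma parallel_eq_if_common_point: "parallel Ls l m \<Longrightarrow> X \<in> l \<Longrightarrow> X \<in> m \<Longrightarrow> l = m"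
  unfolding parallel_def by auto

lemma not_parallel_if_crossing:
  "l \<in> Ls \<Longrightarrow> m \<in> Ls \<Longrightarrow> l \<noteq> m \<Longrightarrow> X \<in> l \<Longrightarrow> X \<in> m \<Longrightarrow> \<not> parallel Ls l m"
  unfolding parallel_def by auto

lemma not_parallel_line_of_off_line:
  "l \<in> Ls \<Longrightarrow> X \<in> l \<Longrightarrow> B \<notin> l \<Longrightarrow> \<not> parallel Ls (line_of Ls X B) l"
  by (metis empty_iff left_in_line_of parallel_def right_in_line_of IntI)

lemma ex1_parallel_through:
  assumes l: "l \<in> Ls" shows "\<exists>!m. m \<in> Ls \<and> P \<in> m \<and> parallel Ls m l"
proof (cases "P \<in> l")
  case True
  then show ?thesis using l by (metis parallel_eq_if_common_point parallel_refl)
next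
  case False
  then have "parallel Ls m l \<longleftrightarrow> m \<in> Ls \<and> m \<inter> l = {}" if "P \<in> m" for m
    using that l unfolding parallel_def by auto
  then show ?thesis
    using playfair[OF l False] by (metis (no_types, lifting))
qed

lemma par_through_in [simp]: "l \<in> Ls \<Longrightarrow> par_through Ls P l \<in> Ls"
  and in_par_through [simp]: "l \<in> Ls \<Longrightarrow> P \<in> par_through Ls P l"
  and parallel_par_through: "l \<in> Ls \<Longrightarrow> parallel Ls (par_through Ls P l) l"
  using theI'[OF ex1_parallel_through] unfolding par_through_def by blast+

lemma par_through_eq: "l \<in> Ls \<Longrightarrow> P \<in> m \<Longrightarrow> parallel Ls m l \<Longrightarrow> par_through Ls P l = m"
  unfolding par_through_def
  by (rule the1_equality[OF ex1_parallel_through]) (auto dest: parallel_in)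

lemma par_through_self: "l \<in> Ls \<Longrightarrow> P \<in> l \<Longrightarrow> par_through Ls P l = l"
  by (simp add: par_through_eq parallel_refl)

lemma par_through_disjoint: "l \<in> Ls \<Longrightarrow> P \<notin> l \<Longrightarrow> X \<in> par_through Ls P l \<Longrightarrow> X \<notin> l"
  using parallel_eq_if_common_point[OF parallel_par_through] in_par_through by metis

lemma parallel_trans: assumes "parallel Ls l m" "parallel Ls m n" shows "parallel Ls l n"
proof (cases "l \<inter> n = {}")
  case True
  then show ?thesis using assms unfolding parallel_def by auto
next
  case False
  then obtain P where "P \<in> l" "P \<in> n" by auto
  then have "l = par_through Ls P m" "n = par_through Ls P m"
    using assms par_through_eq parallel_sym parallel_in by metis+
  then show ?thesis using assms parallel_refl parallel_in by metis
qed

lemma meet_eq: "l \<in> Ls \<Longrightarrow> m \<in> Ls \<Longrightarrow> l \<noteq> m \<Longrightarrow> X \<in> l \<Longrightarrow> X \<in> m \<Longrightarrow> meet l m = X"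
  unfolding meet_def using lines_eq_if_two_common_points by blast

lemma meet_in:
  assumes "l \<in> Ls" "m \<in> Ls" "\<not> parallel Ls l m"
  shows "meet l m \<in> l" "meet l m \<in> m"
proof -
  obtain X where "X \<in> l" "X \<in> m" "l \<noteq> m" using assms unfolding parallel_def by auto
  then show "meet l m \<in> l" "meet l m \<in> m" using meet_eq assms by auto
qed

lemma meet_line_of_off_line: "l \<in> Ls \<Longrightarrow> B \<in> l \<Longrightarrow> B1 \<notin> l \<Longrightarrow> meet l (line_of Ls B B1) = B"
  by (metis left_in_line_of line_of_in meet_eq right_in_line_of)

lemma exists_point_off_crossing_lines:
  assumes l: "l \<in> Ls" and k: "k \<in> Ls" "\<not> parallel Ls l k" and X: "X \<in> l" "X \<notin> k"
  shows "\<exists>Y. Y \<notin> l \<and> Y \<notin> k"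
proof -
  let ?r = "par_through Ls X k"
  obtain Y where Y: "Y \<in> ?r" "Y \<noteq> X"
    using line_has_two_points[OF par_through_in[OF k(1)]] by metis
  have "?r \<noteq> l" using parallel_par_through[OF k(1), of X] k(2) by metis
  then have "Y \<notin> l"
    using lines_eq_if_two_common_points[OF par_through_in[OF k(1)] l in_par_through[OF k(1)] X(1)
        Y(1)] Y(2)
    by blast
  moreover have "Y \<notin> k" using par_through_disjoint[OF k(1) X(2) Y(1)] .
  ultimately show ?thesis by blast
qed

end

section \<open>Pencils and parallel projection\<close>

definition pencil :: "'p set set \<Rightarrow> 'p set \<Rightarrow> 'p set \<Rightarrow> 'p set \<Rightarrow> bool" where
  "pencil Ls l m n \<longleftrightarrow> l \<in> Ls \<and> m \<in> Ls \<and> n \<in> Ls \<and> l \<noteq> m \<and> m \<noteq> n \<and> l \<noteq> n \<and>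
     ((parallel Ls l m \<and> parallel Ls m n) \<or> (\<exists>S. S \<in> l \<and> S \<in> m \<and> S \<in> n))"

definition par_proj :: "'p set set \<Rightarrow> 'p set \<Rightarrow> 'p set \<Rightarrow> 'p \<Rightarrow> 'p" where
  "par_proj Ls l d P = meet l (par_through Ls P d)"

context affine_incidence
begin

lemma pencil_swap: "pencil Ls l m n \<Longrightarrow> pencil Ls m l n"
  unfolding pencil_def by (meson parallel_sym parallel_trans)

lemma pencil_inter: assumes "pencil Ls l m n" "X \<in> m" "X \<in> n" shows "X \<in> l"
  using assms lines_eq_if_two_common_points parallel_eq_if_common_point unfolding pencil_def
  by metis

lemma not_parallel_par_through:
  "d \<in> Ls \<Longrightarrow> \<not> parallel Ls l d \<Longrightarrow> \<not> parallel Ls l (par_through Ls P d)"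
  using parallel_trans parallel_par_through by blast

context
  fixes l d :: "'p set"
  assumes l: "l \<in> Ls" and d: "d \<in> Ls" and l_d: "\<not> parallel Ls l d"
begin

lemma par_proj_in_line: "par_proj Ls l d P \<in> l"
  and par_proj_in_par_through: "par_proj Ls l d P \<in> par_through Ls P d"
  using meet_in[OF l par_through_in[OF d] not_parallel_par_through[OF d l_d]]
  unfolding par_proj_def by auto

lemma par_proj_eq_iff: "par_proj Ls l d P = X \<longleftrightarrow> X \<in> l \<and> X \<in> par_through Ls P d"
proof
  show "X \<in> l \<and> X \<in> par_through Ls P d" if "par_proj Ls l d P = X"
    using that par_proj_in_line par_proj_in_par_through by blast
  have "l \<noteq> par_through Ls P d"
    using not_parallel_par_through[OF d l_d] parallel_refl[OF l] by metis
  then show "par_proj Ls l d P = X" if "X \<in> l \<and> X \<in> par_through Ls P d"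
    using that meet_eq[OF l par_through_in[OF d]] unfolding par_proj_def by blast
qed

lemma par_proj_eq_self: "P \<in> l \<Longrightarrow> par_proj Ls l d P = P"
  using par_proj_eq_iff d by simp

lemma par_proj_of_in_direction: "P \<in> d \<Longrightarrow> par_proj Ls l d P = meet l d"
  unfolding par_proj_def by (simp add: par_through_self d)

lemma in_direction_if_par_proj_in: "par_proj Ls l d P \<in> d \<Longrightarrow> P \<in> d"
  using parallel_eq_if_common_point[OF parallel_par_through[OF d] par_proj_in_par_through]
    in_par_through[OF d] by metis

lemma par_proj_eq_par_proj_iff:
  "par_proj Ls l d P = par_proj Ls l d Q \<longleftrightarrow> Q \<in> par_through Ls P d"
proof
  assume "par_proj Ls l d P = par_proj Ls l d Q"
  then have "par_through Ls P d = par_through Ls Q d"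
    using parallel_eq_if_common_point par_proj_in_par_through
      parallel_trans[OF parallel_par_through[OF d] parallel_sym[OF parallel_par_through[OF d]]]
    by metis
  then show "Q \<in> par_through Ls P d" using d by simp
next
  assume "Q \<in> par_through Ls P d"
  then have "par_through Ls Q d = par_through Ls P d"
    using par_through_eq[OF d _ parallel_par_through[OF d]] by blast
  then show "par_proj Ls l d P = par_proj Ls l d Q" unfolding par_proj_def by simp
qed

end

lemma ex1_par_proj_through_aux:
  assumes l: "l \<in> Ls" and B1: "B1 \<notin> l" and P: "P \<notin> l" and T: "T \<in> l"
  shows "\<exists>!B. B \<in> l \<and> par_proj Ls l (line_of Ls B B1) P = T"
proof -
  have TP: "T \<noteq> P" using P T by auto
  define k where "k = par_through Ls B1 (line_of Ls T P)"
  have k: "k \<in> Ls" "B1 \<in> k" "parallel Ls k (line_of Ls T P)"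
    using TP parallel_par_through unfolding k_def by auto
  have iff: "par_proj Ls l (line_of Ls B B1) P = T \<longleftrightarrow> B \<in> k" if B: "B \<in> l" for B
  proof -
    have BB1: "B \<noteq> B1" using B B1 by auto
    have dB: "line_of Ls B B1 \<in> Ls" "\<not> parallel Ls l (line_of Ls B B1)"
      using BB1 not_parallel_line_of_off_line[OF l B B1] parallel_sym by auto
    have "par_proj Ls l (line_of Ls B B1) P = T \<longleftrightarrow> T \<in> par_through Ls P (line_of Ls B B1)"
      using par_proj_eq_iff[OF l dB(1) dB(2)] T by blast
    also have "\<dots> \<longleftrightarrow> parallel Ls (line_of Ls T P) (line_of Ls B B1)"
      using line_of_eq[OF par_through_in[OF dB(1)] _ in_par_through[OF dB(1)] TP]
        par_through_eq[OF dB(1), of P "line_of Ls T P"] parallel_par_through[OF dB(1)] TP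
      by (metis right_in_line_of left_in_line_of)
    also have "\<dots> \<longleftrightarrow> B \<in> k"
      using par_through_eq[OF line_of_in[OF TP] _ parallel_sym, of B1 "line_of Ls B B1"]
        line_of_eq[OF k(1) _ k(2) BB1] k(3) BB1 unfolding k_def
      by (metis left_in_line_of parallel_sym right_in_line_of)
    finally show ?thesis .
  qed
  have "\<not> parallel Ls l k"
    using not_parallel_if_crossing[OF l line_of_in[OF TP] _ T] k(3) P TP parallel_trans
    by (metis left_in_line_of right_in_line_of)
  then have "meet l k \<in> l \<and> meet l k \<in> k" "\<And>B. B \<in> l \<Longrightarrow> B \<in> k \<Longrightarrow> B = meet l k"
    using meet_in[OF l k(1)] meet_eq[OF l k(1)] parallel_refl[OF l] by metis+
  then show ?thesis using iff by blast
qed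

lemma
  assumes l: "l \<in> Ls" and m: "m \<in> Ls" and B: "B \<in> l" "B \<notin> m"
    and B1: "B1 \<in> m" "B1 \<notin> l" and P1: "P1 \<in> m" "P1 \<notin> l" "B1 \<noteq> P1"
  shows par_proj_neq_base: "par_proj Ls l (line_of Ls B B1) P1 \<noteq> B"
    and par_proj_not_in_line: "par_proj Ls l (line_of Ls B B1) P1 \<notin> m"
proof -
  have "B \<noteq> B1" using B B1 by auto
  then have d: "line_of Ls B B1 \<in> Ls" "\<not> parallel Ls l (line_of Ls B B1)"
    and B1_d: "B1 \<in> line_of Ls B B1"
    using not_parallel_line_of_off_line[OF l B(1) B1(2)] parallel_sym by auto
  define X where "X = par_proj Ls l (line_of Ls B B1) P1"
  have X: "X \<in> l" "X \<in> par_through Ls P1 (line_of Ls B B1)"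
    using par_proj_in_line[OF l d] par_proj_in_par_through[OF l d] unfolding X_def by auto
  show "X \<noteq> B"
  proof
    assume "X = B"
    then have "P1 \<in> line_of Ls B B1"
      using in_direction_if_par_proj_in[OF l d] \<open>B \<noteq> B1\<close> unfolding X_def by simp
    then have "line_of Ls B B1 = m"
      using lines_eq_if_two_common_points[OF d(1) m B1_d B1(1) _ P1(1) P1(3)] by blast
    then show False using B(2) \<open>B \<noteq> B1\<close> by (metis left_in_line_of)
  qed
  show "X \<notin> m"
  proof
    assume "X \<in> m"
    moreover have "X \<noteq> P1" using X(1) P1(2) by auto
    ultimately have "par_through Ls P1 (line_of Ls B B1) = m"
      using lines_eq_if_two_common_points[OF par_through_in[OF d(1)] m X(2) _
          in_par_through[OF d(1)] P1(1)]
      by blast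
    then have "parallel Ls m (line_of Ls B B1)" using parallel_par_through[OF d(1), of P1] by simp
    then have "m = line_of Ls B B1" using parallel_eq_if_common_point B1(1) B1_d by blast
    then show False using B(2) \<open>B \<noteq> B1\<close> by simp
  qed
qed

end

section \<open>Sum and product with a given auxiliary point\<close>

definition add_pivot :: "'p set set \<Rightarrow> 'p \<Rightarrow> 'p \<Rightarrow> 'p \<Rightarrow> 'p \<Rightarrow> 'p" where
  "add_pivot Ls Oz Iu B1 A =
     par_proj Ls (par_through Ls B1 (line_of Ls Oz Iu)) (line_of Ls Oz B1) A"

definition mul_pivot :: "'p set set \<Rightarrow> 'p \<Rightarrow> 'p \<Rightarrow> 'p \<Rightarrow> 'p \<Rightarrow> 'p" where
  "mul_pivot Ls Oz Iu B1 A = par_proj Ls (line_of Ls Oz B1) (line_of Ls Iu B1) A"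

definition add_with :: "'p set set \<Rightarrow> 'p \<Rightarrow> 'p \<Rightarrow> 'p \<Rightarrow> 'p \<Rightarrow> 'p \<Rightarrow> 'p" where
  "add_with Ls Oz Iu B1 A B =
     par_proj Ls (line_of Ls Oz Iu) (line_of Ls B B1) (add_pivot Ls Oz Iu B1 A)"

definition mul_with :: "'p set set \<Rightarrow> 'p \<Rightarrow> 'p \<Rightarrow> 'p \<Rightarrow> 'p \<Rightarrow> 'p \<Rightarrow> 'p" where
  "mul_with Ls Oz Iu B1 A B =
     par_proj Ls (line_of Ls Oz Iu) (line_of Ls B B1) (mul_pivot Ls Oz Iu B1 A)"

lemma sf_add_eq_add_with: "sf_add Ls Oz Iu A B = add_with Ls Oz Iu (aux_pt Ls Oz Iu) A B"
  unfolding sf_add_def add_with_def add_pivot_def par_proj_def Let_def ..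

lemma meet_commute: "meet l m = meet m l"
  unfolding meet_def by (simp add: conj_commute)

lemma sf_mul_eq_mul_with: "sf_mul Ls Oz Iu A B = mul_with Ls Oz Iu (aux_pt Ls Oz Iu) A B"
  unfolding sf_mul_def mul_with_def mul_pivot_def par_proj_def Let_def
  by (subst (2) meet_commute) (rule refl)

context affine_incidence
begin

context
  fixes Oz Iu B1 :: 'p
  assumes Oz_Iu: "Oz \<noteq> Iu" and B1_off: "B1 \<notin> line_of Ls Oz Iu"
begin

private lemma frame_facts:
  "Oz \<noteq> Iu" "Iu \<noteq> Oz" "B1 \<notin> line_of Ls Oz Iu" "Oz \<noteq> B1" "Iu \<noteq> B1"
  "line_of Ls Oz Iu \<in> Ls" "Oz \<in> line_of Ls Oz Iu" "Iu \<in> line_of Ls Oz Iu"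
  using Oz_Iu B1_off by auto

private lemma direction_facts:
  assumes "B \<in> line_of Ls Oz Iu"
  shows "B \<noteq> B1" "line_of Ls B B1 \<in> Ls" "\<not> parallel Ls (line_of Ls Oz Iu) (line_of Ls B B1)"
proof -
  show "B \<noteq> B1" using assms B1_off by (auto simp: frame_facts)
  then show "line_of Ls B B1 \<in> Ls" by (simp add: frame_facts)
  show "\<not> parallel Ls (line_of Ls Oz Iu) (line_of Ls B B1)"
    using not_parallel_line_of_off_line[OF _ assms B1_off] parallel_sym by (auto simp: frame_facts)
qed

lemma add_pivot_frame:
  "par_through Ls B1 (line_of Ls Oz Iu) \<in> Ls" "line_of Ls Oz B1 \<in> Ls"
  "\<not> parallel Ls (par_through Ls B1 (line_of Ls Oz Iu)) (line_of Ls Oz B1)"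
proof -
  show "par_through Ls B1 (line_of Ls Oz Iu) \<in> Ls" "line_of Ls Oz B1 \<in> Ls"
    by (simp_all add: frame_facts)
  show "\<not> parallel Ls (par_through Ls B1 (line_of Ls Oz Iu)) (line_of Ls Oz B1)"
  proof
    assume "parallel Ls (par_through Ls B1 (line_of Ls Oz Iu)) (line_of Ls Oz B1)"
    then have "parallel Ls (line_of Ls Oz Iu) (line_of Ls Oz B1)"
      using parallel_trans[OF parallel_sym[OF parallel_par_through[OF frame_facts(6)]]] by blast
    then show False using direction_facts(3)[of Oz] by (simp add: frame_facts)
  qed
qed

lemma add_pivot_in_par_through_aux: "add_pivot Ls Oz Iu B1 A \<in> par_through Ls B1 (line_of Ls Oz Iu)"
  and add_pivot_in_par_through: "add_pivot Ls Oz Iu B1 A \<in> par_through Ls A (line_of Ls Oz B1)"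
  unfolding add_pivot_def
  using par_proj_in_line[OF add_pivot_frame] par_proj_in_par_through[OF add_pivot_frame]
  by (auto simp: frame_facts)

lemma add_pivot_not_in_line: "add_pivot Ls Oz Iu B1 A \<notin> line_of Ls Oz Iu"
  using par_through_disjoint[OF frame_facts(6,3) add_pivot_in_par_through_aux] .

lemma add_pivot_zero: "add_pivot Ls Oz Iu B1 Oz = B1"
proof -
  have "par_through Ls B1 (line_of Ls Oz Iu) \<noteq> line_of Ls Oz B1"
    using add_pivot_frame parallel_refl by metis
  then show ?thesis
    unfolding add_pivot_def
      par_proj_of_in_direction[OF add_pivot_frame left_in_line_of[OF frame_facts(4)]]
    using meet_eq[OF add_pivot_frame(1,2)] by (simp add: frame_facts)
qed

lemma add_pivot_neq_aux:
  assumes "A \<in> line_of Ls Oz Iu" "A \<noteq> Oz"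
  shows "add_pivot Ls Oz Iu B1 A \<noteq> B1"
proof
  assume "add_pivot Ls Oz Iu B1 A = B1"
  then have "A \<in> line_of Ls Oz B1"
    using in_direction_if_par_proj_in[OF add_pivot_frame] unfolding add_pivot_def
    by (simp add: frame_facts)
  then show False using line_of_off_line_meets_once[of "line_of Ls Oz Iu" Oz B1 A] assms
    by (simp add: frame_facts)
qed

lemma add_pivot_inj:
  assumes "A \<in> line_of Ls Oz Iu" "A' \<in> line_of Ls Oz Iu"
    and "add_pivot Ls Oz Iu B1 A = add_pivot Ls Oz Iu B1 A'"
  shows "A = A'"
proof (rule ccontr)
  assume "A \<noteq> A'"
  moreover have "A' \<in> par_through Ls A (line_of Ls Oz B1)"
    using assms(3) par_proj_eq_par_proj_iff[OF add_pivot_frame] unfolding add_pivot_def by blast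
  ultimately have "par_through Ls A (line_of Ls Oz B1) = line_of Ls Oz Iu"
    using lines_eq_if_two_common_points[OF par_through_in _ _ assms(1) _ assms(2)]
    by (simp add: frame_facts)
  then show False
    using parallel_par_through[of "line_of Ls Oz B1" A] direction_facts(3)[of Oz]
    by (simp add: frame_facts)
qed

lemma mul_pivot_frame:
  "line_of Ls Oz B1 \<in> Ls" "line_of Ls Iu B1 \<in> Ls"
  "\<not> parallel Ls (line_of Ls Oz B1) (line_of Ls Iu B1)"
proof -
  have "Iu \<notin> line_of Ls Oz B1" using line_of_off_line_meets_once[of "line_of Ls Oz Iu" Oz B1 Iu]
    by (auto simp: frame_facts)
  then have "line_of Ls Oz B1 \<noteq> line_of Ls Iu B1" by (metis frame_facts(5) left_in_line_of)
  then show "line_of Ls Oz B1 \<in> Ls" "line_of Ls Iu B1 \<in> Ls"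
    "\<not> parallel Ls (line_of Ls Oz B1) (line_of Ls Iu B1)"
    using not_parallel_if_crossing[of "line_of Ls Oz B1" "line_of Ls Iu B1" B1]
    by (auto simp: frame_facts)
qed

lemma mul_pivot_in_line_of_aux: "mul_pivot Ls Oz Iu B1 A \<in> line_of Ls Oz B1"
  and mul_pivot_in_par_through: "mul_pivot Ls Oz Iu B1 A \<in> par_through Ls A (line_of Ls Iu B1)"
  unfolding mul_pivot_def
  using par_proj_in_line[OF mul_pivot_frame] par_proj_in_par_through[OF mul_pivot_frame]
  by (auto simp: frame_facts)

lemma mul_pivot_zero: "mul_pivot Ls Oz Iu B1 Oz = Oz"
  unfolding mul_pivot_def by (simp add: par_proj_eq_self[OF mul_pivot_frame] frame_facts)

lemma mul_pivot_one: "mul_pivot Ls Oz Iu B1 Iu = B1"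
proof -
  have "line_of Ls Oz B1 \<noteq> line_of Ls Iu B1"
    using mul_pivot_frame parallel_refl by metis
  then show ?thesis
    unfolding mul_pivot_def
      par_proj_of_in_direction[OF mul_pivot_frame left_in_line_of[OF frame_facts(5)]]
    using meet_eq[OF mul_pivot_frame(1,2)] by (simp add: frame_facts)
qed

lemma mul_pivot_not_in_line:
  assumes "A \<in> line_of Ls Oz Iu" "A \<noteq> Oz"
  shows "mul_pivot Ls Oz Iu B1 A \<notin> line_of Ls Oz Iu"
proof
  assume "mul_pivot Ls Oz Iu B1 A \<in> line_of Ls Oz Iu"
  then have "mul_pivot Ls Oz Iu B1 A = Oz"
    using line_of_off_line_meets_once[of "line_of Ls Oz Iu" Oz B1] mul_pivot_in_line_of_aux
    by (simp add: frame_facts)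
  then have "Oz \<in> par_through Ls A (line_of Ls Iu B1)"
    using mul_pivot_in_par_through[of A] by (simp add: frame_facts)
  then have "par_through Ls A (line_of Ls Iu B1) = line_of Ls Oz Iu"
    using lines_eq_if_two_common_points[OF par_through_in frame_facts(6) _ assms(1) _
        frame_facts(7)]
      assms(2) mul_pivot_frame(2) by (simp add: frame_facts)
  then show False
    using parallel_par_through[of "line_of Ls Iu B1" A] direction_facts(3)[of Iu]
    by (simp add: frame_facts)
qed

lemma mul_pivot_neq_aux:
  assumes "A \<in> line_of Ls Oz Iu" "A \<noteq> Iu"
  shows "mul_pivot Ls Oz Iu B1 A \<noteq> B1"
proof
  assume "mul_pivot Ls Oz Iu B1 A = B1"
  then have "A \<in> line_of Ls Iu B1"
    using in_direction_if_par_proj_in[OF mul_pivot_frame] unfolding mul_pivot_def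
    by (simp add: frame_facts)
  then show False using line_of_off_line_meets_once[of "line_of Ls Oz Iu" Iu B1 A] assms
    by (simp add: frame_facts)
qed

lemma add_with_in_line: "B \<in> line_of Ls Oz Iu \<Longrightarrow> add_with Ls Oz Iu B1 A B \<in> line_of Ls Oz Iu"
  unfolding add_with_def using par_proj_in_line[OF _ direction_facts(2,3)]
  by (simp add: frame_facts)

private lemma par_proj_of_aux:
  assumes "B \<in> line_of Ls Oz Iu"
  shows "par_proj Ls (line_of Ls Oz Iu) (line_of Ls B B1) B1 = B"
  using par_proj_of_in_direction[OF _ direction_facts(2,3)] meet_line_of_off_line
    direction_facts(1) assms
  by (simp add: frame_facts)

lemma add_with_zero_left: "B \<in> line_of Ls Oz Iu \<Longrightarrow> add_with Ls Oz Iu B1 Oz B = B"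
  unfolding add_with_def add_pivot_zero by (rule par_proj_of_aux)

lemma mul_with_one_left: "B \<in> line_of Ls Oz Iu \<Longrightarrow> mul_with Ls Oz Iu B1 Iu B = B"
  unfolding mul_with_def mul_pivot_one by (rule par_proj_of_aux)

lemma mul_with_zero_left: "B \<in> line_of Ls Oz Iu \<Longrightarrow> mul_with Ls Oz Iu B1 Oz B = Oz"
  unfolding mul_with_def mul_pivot_zero using par_proj_eq_self[OF _ direction_facts(2,3)]
  by (simp add: frame_facts)

lemma mul_with_zero_right: "mul_with Ls Oz Iu B1 A Oz = Oz"
  unfolding mul_with_def
  using par_proj_of_in_direction[OF _ direction_facts(2,3) mul_pivot_in_line_of_aux]
    meet_line_of_off_line by (simp add: frame_facts)

lemma add_with_neq_right:
  assumes "A \<in> line_of Ls Oz Iu" "B \<in> line_of Ls Oz Iu" "A \<noteq> Oz"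
  shows "add_with Ls Oz Iu B1 A B \<noteq> B"
proof -
  have "B \<notin> par_through Ls B1 (line_of Ls Oz Iu)"
    using par_through_disjoint[OF frame_facts(6,3)] assms(2) by blast
  then show ?thesis
    unfolding add_with_def
    using par_proj_neq_base[OF frame_facts(6) par_through_in[OF frame_facts(6)] assms(2) _
        in_par_through[OF frame_facts(6)] frame_facts(3) add_pivot_in_par_through_aux
        add_pivot_not_in_line add_pivot_neq_aux[OF assms(1,3), symmetric]] by blast
qed

lemma add_with_right_cancel:
  assumes "A \<in> line_of Ls Oz Iu" "A' \<in> line_of Ls Oz Iu" "Y \<in> line_of Ls Oz Iu"
    and "add_with Ls Oz Iu B1 A Y = add_with Ls Oz Iu B1 A' Y"
  shows "A = A'"
proof -
  let ?P = "add_pivot Ls Oz Iu B1 A" and ?P' = "add_pivot Ls Oz Iu B1 A'"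
  note dY = direction_facts[OF assms(3)]
  have "?P' \<in> par_through Ls ?P (line_of Ls Y B1)"
    using assms(4) par_proj_eq_par_proj_iff[OF _ dY(2,3)] unfolding add_with_def
    by (simp add: frame_facts)
  have "?P = ?P'"
  proof (rule ccontr)
    assume "?P \<noteq> ?P'"
    then have "par_through Ls ?P (line_of Ls Y B1) = par_through Ls B1 (line_of Ls Oz Iu)"
      using lines_eq_if_two_common_points[OF par_through_in par_through_in in_par_through
          add_pivot_in_par_through_aux \<open>?P' \<in> _\<close> add_pivot_in_par_through_aux] dY(2)
            by (simp add: frame_facts)
    then have "parallel Ls (par_through Ls B1 (line_of Ls Oz Iu)) (line_of Ls Y B1)"
      using parallel_par_through[OF dY(2), of ?P] by (simp add: frame_facts)
    then have "parallel Ls (line_of Ls Oz Iu) (line_of Ls Y B1)"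
      using parallel_trans[OF parallel_sym[OF parallel_par_through[OF frame_facts(6)]]] by blast
    then show False using dY(3) by (simp add: frame_facts)
  qed
  then show ?thesis using add_pivot_inj assms(1,2) by blast
qed

lemma ex1_add_with_eq_zero: "\<exists>!Y. Y \<in> line_of Ls Oz Iu \<and> add_with Ls Oz Iu B1 X Y = Oz"
  unfolding add_with_def
  using ex1_par_proj_through_aux[OF frame_facts(6,3) add_pivot_not_in_line frame_facts(7)] .

lemma ex1_mul_with_eq_one:
  "X \<in> line_of Ls Oz Iu \<Longrightarrow> X \<noteq> Oz \<Longrightarrow> \<exists>!Y. Y \<in> line_of Ls Oz Iu \<and> mul_with Ls Oz Iu B1 X Y = Iu"
  unfolding mul_with_def
  using ex1_par_proj_through_aux[OF frame_facts(6,3) mul_pivot_not_in_line frame_facts(8)] .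

end

end

context affine_incidence
begin

lemma line_of_in_plane_of_two_lines:
  assumes "l \<in> Ls" "m \<in> Ls" "\<And>Z. Z \<in> l \<or> Z \<in> m"
    and "U \<in> l" "U \<notin> m" "V \<in> m" "V \<notin> l"
  shows "line_of Ls U V = {U, V}"
proof (rule equalityI)
  have "U \<noteq> V" using assms(4,7) by auto
  show "line_of Ls U V \<subseteq> {U, V}"
  proof
    fix Z assume Z: "Z \<in> line_of Ls U V"
    have UV: "line_of Ls U V \<in> Ls" "U \<in> line_of Ls U V" "V \<in> line_of Ls U V"
      using \<open>U \<noteq> V\<close> by simp_all
    have "Z = U" if "Z \<in> l"
    proof (rule ccontr)
      assume "Z \<noteq> U"
      then have "line_of Ls U V = l"
        using lines_eq_if_two_common_points[OF UV(1) assms(1) UV(2) assms(4) Z that] by simp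
      then show False using UV(3) assms(7) by simp
    qed
    moreover have "Z = V" if "Z \<in> m"
    proof (rule ccontr)
      assume "Z \<noteq> V"
      then have "line_of Ls U V = m"
        using lines_eq_if_two_common_points[OF UV(1) assms(2) UV(3) assms(6) Z that] by simp
      then show False using UV(2) assms(5) by simp
    qed
    ultimately show "Z \<in> {U, V}" using assms(3) by blast
  qed
  show "{U, V} \<subseteq> line_of Ls U V" using \<open>U \<noteq> V\<close> by simp
qed

(* In the affine plane of order 2 there may be no third auxiliary point to pass through,
   but there every line has only two points. *)

lemma add_with_indep_degenerate:
  assumes OI: "Oz \<noteq> Iu" and B1: "B1 \<notin> line_of Ls Oz Iu"
    and A: "A \<in> line_of Ls Oz Iu" "A \<noteq> Oz" and B: "B \<in> line_of Ls Oz Iu"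
    and B2: "B2 \<in> par_through Ls B1 (line_of Ls Oz Iu)"
    and covered: "\<And>Z. Z \<in> line_of Ls Oz Iu \<or> Z \<in> par_through Ls B1 (line_of Ls Oz Iu)"
  shows "add_with Ls Oz Iu B1 A B = add_with Ls Oz Iu B2 A B"
proof -
  let ?l = "line_of Ls Oz Iu" and ?m = "par_through Ls B1 (line_of Ls Oz Iu)"
  have l: "?l \<in> Ls" "?m \<in> Ls" using OI by simp_all
  have B2_off: "B2 \<notin> ?l" using par_through_disjoint[OF l(1) B1 B2] .
  have m: "par_through Ls B2 ?l = ?m"
    using par_through_eq[OF l(1) B2 parallel_par_through[OF l(1)]] .
  define X where "X = add_with Ls Oz Iu B1 A B"
  define P2 where "P2 = add_pivot Ls Oz Iu B2 A"
  have X: "X \<in> ?l" "X \<noteq> B" "X \<notin> ?m"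
    using add_with_in_line[OF OI B1 B] add_with_neq_right[OF OI B1 A(1) B A(2)]
      par_through_disjoint[OF l(1) B1] unfolding X_def by blast+
  have P2: "P2 \<in> ?m" "P2 \<notin> ?l" "P2 \<noteq> B2"
    using add_pivot_in_par_through_aux[OF OI B2_off] add_pivot_not_in_line[OF OI B2_off]
      add_pivot_neq_aux[OF OI B2_off A] unfolding P2_def m by blast+
  have B_off: "B \<notin> ?m" using par_through_disjoint[OF l(1) B1] B by blast
  have two_points: "line_of Ls X P2 = {X, P2}" "line_of Ls B B2 = {B, B2}"
    using line_of_in_plane_of_two_lines[OF l covered] X P2 B B_off B2 B2_off by blast+
  have "X \<noteq> P2" "B \<noteq> B2" using X P2 B B2_off by auto
  moreover have "{X, P2} \<inter> {B, B2} = {}" using X P2 B B2_off by auto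
  ultimately have "parallel Ls (line_of Ls X P2) (line_of Ls B B2)"
    unfolding parallel_def using line_of_in two_points by metis
  then have "par_through Ls P2 (line_of Ls B B2) = line_of Ls X P2"
    using par_through_eq \<open>X \<noteq> P2\<close> \<open>B \<noteq> B2\<close> by simp
  moreover have "\<not> parallel Ls ?l (line_of Ls B B2)"
    using not_parallel_line_of_off_line[OF l(1) B B2_off] parallel_sym by blast
  ultimately have "add_with Ls Oz Iu B2 A B = X"
    using par_proj_eq_iff[OF l(1) line_of_in[OF \<open>B \<noteq> B2\<close>]] X(1) \<open>X \<noteq> P2\<close>
    unfolding add_with_def P2_def[symmetric] by simp
  then show ?thesis unfolding X_def by simp
qed

end

section \<open>Independence of the auxiliary point\<close>

locale desarguesian_plane = affine_incidence Ls for Ls :: "'p set set" +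
  assumes desargues_axiom: "desargues_axiom Ls"
begin

(* Desargues' axiom for the triangles B U C and P V Q, in perspective from the pencil
   l, m, n; its nondegeneracy conditions follow from the incidences. *)

lemma desargues_pencil:
  assumes pencil: "pencil Ls l m n"
    and UV: "U \<in> l" "V \<in> l" "U \<noteq> V"
    and B: "B \<in> m" "B \<notin> l" and P: "P \<in> m" "P \<notin> l" "B \<noteq> P"
    and C: "C \<in> n" "C \<notin> l" and Q: "Q \<in> n" "Q \<notin> l" "C \<noteq> Q"
    and UB_VP: "parallel Ls (line_of Ls U B) (line_of Ls V P)"
    and UC_VQ: "parallel Ls (line_of Ls U C) (line_of Ls V Q)"
  shows "parallel Ls (line_of Ls B C) (line_of Ls P Q)"
proof -
  have lines: "l \<in> Ls" "m \<in> Ls" "n \<in> Ls" "l \<noteq> m" "m \<noteq> n" "l \<noteq> n"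
    using pencil unfolding pencil_def by auto
  have spanned: "line_of Ls B P = m" "line_of Ls U V = l" "line_of Ls C Q = n"
    using line_of_eq lines assms by auto
  have "B \<noteq> C" "P \<noteq> Q" using pencil_inter[OF pencil] B C P Q by metis+
  have side_lines_distinct: "line_of Ls U X \<noteq> line_of Ls V Y" if "X \<notin> l" "Y \<notin> l" for X Y
  proof
    assume eq: "line_of Ls U X = line_of Ls V Y"
    have "U \<noteq> X" "V \<noteq> Y" using that UV by auto
    then have "line_of Ls U X = l"
      using lines_eq_if_two_common_points[of "line_of Ls U X" l U V] eq UV lines(1)
      by (metis left_in_line_of line_of_in)
    then show False using that \<open>U \<noteq> X\<close> by (metis right_in_line_of)
  qed
  have centre: "(parallel Ls m l \<and> parallel Ls l n \<and> parallel Ls m n) \<or>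
      (\<exists>S. S \<in> m \<and> S \<in> l \<and> S \<in> n)"
    using pencil parallel_sym parallel_trans unfolding pencil_def by blast
  show ?thesis
    by (rule desargues_axiom[unfolded desargues_axiom_def, rule_format, of B P U V C Q],
        intro conjI)
      (use side_lines_distinct[of B P] side_lines_distinct[of C Q] centre spanned lines
        UB_VP UC_VQ \<open>B \<noteq> C\<close> \<open>P \<noteq> Q\<close> UV B P C Q in
        \<open>auto simp: line_of_commute[of B U] line_of_commute[of P V]\<close>)
qed

(* The second application of Desargues' axiom, common to addition and multiplication. *)

lemma par_proj_change_aux:
  assumes pencil: "pencil Ls l m n" and B: "B \<in> l" "B \<notin> m"
    and B1: "B1 \<in> m" "B1 \<notin> l" and P1: "P1 \<in> m" "P1 \<notin> l" "B1 \<noteq> P1"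
    and B2: "B2 \<in> n" "B2 \<notin> l" and P2: "P2 \<in> n" "P2 \<notin> l" "B2 \<noteq> P2"
    and B1B2_P1P2: "parallel Ls (line_of Ls B1 B2) (line_of Ls P1 P2)"
  shows "par_proj Ls l (line_of Ls B B1) P1 = par_proj Ls l (line_of Ls B B2) P2"
proof -
  have l: "l \<in> Ls" "m \<in> Ls" using pencil unfolding pencil_def by auto
  have "B \<noteq> B1" "B \<noteq> B2" using B B1 B2 by auto
  then have d1: "line_of Ls B B1 \<in> Ls" "\<not> parallel Ls l (line_of Ls B B1)"
    and d2: "line_of Ls B B2 \<in> Ls" "\<not> parallel Ls l (line_of Ls B B2)"
    using not_parallel_line_of_off_line[OF l(1) B(1)] B1(2) B2(2) parallel_sym by auto
  define X where "X = par_proj Ls l (line_of Ls B B1) P1"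
  have X: "X \<in> l" "X \<in> par_through Ls P1 (line_of Ls B B1)" "X \<noteq> B" "X \<notin> m"
    using par_proj_in_line[OF l(1) d1] par_proj_in_par_through[OF l(1) d1]
      par_proj_neq_base[OF l B B1 P1] par_proj_not_in_line[OF l B B1 P1]
    unfolding X_def by auto
  have "X \<noteq> P1" "X \<noteq> P2" using X(1) P1(2) P2(2) by auto
  have "line_of Ls X P1 = par_through Ls P1 (line_of Ls B B1)"
    using line_of_eq[OF par_through_in[OF d1(1)] X(2) in_par_through[OF d1(1)] \<open>X \<noteq> P1\<close>] .
  then have "parallel Ls (line_of Ls B1 B) (line_of Ls P1 X)"
    using parallel_sym[OF parallel_par_through[OF d1(1)]] line_of_commute by metis
  moreover have "B2 \<notin> m" "P2 \<notin> m" using pencil_inter[OF pencil] B2 P2 by blast+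
  ultimately have "parallel Ls (line_of Ls B B2) (line_of Ls X P2)"
    using desargues_pencil[OF pencil_swap[OF pencil] B1(1) P1(1) P1(3) B X(1) X(4) X(3)[symmetric]
        B2(1) _ P2(1) _ P2(3) _ B1B2_P1P2] by blast
  then have "par_through Ls P2 (line_of Ls B B2) = line_of Ls X P2"
    using par_through_eq[OF d2(1)] \<open>X \<noteq> P2\<close> parallel_sym by simp
  then have "par_proj Ls l (line_of Ls B B2) P2 = X"
    using par_proj_eq_iff[OF l(1) d2] X(1) \<open>X \<noteq> P2\<close> by simp
  then show ?thesis unfolding X_def by simp
qed

lemma add_with_indep_of_not_in_par_through:
  assumes OI: "Oz \<noteq> Iu" and B1: "B1 \<notin> line_of Ls Oz Iu" and B2: "B2 \<notin> line_of Ls Oz Iu"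
    and A: "A \<in> line_of Ls Oz Iu" "A \<noteq> Oz" and B: "B \<in> line_of Ls Oz Iu"
    and B2_m1: "B2 \<notin> par_through Ls B1 (line_of Ls Oz Iu)"
  shows "add_with Ls Oz Iu B1 A B = add_with Ls Oz Iu B2 A B"
proof -
  let ?l = "line_of Ls Oz Iu"
  let ?m1 = "par_through Ls B1 ?l" and ?m2 = "par_through Ls B2 ?l"
  let ?P1 = "add_pivot Ls Oz Iu B1 A" and ?P2 = "add_pivot Ls Oz Iu B2 A"
  have l: "?l \<in> Ls" "Oz \<in> ?l" using OI by simp_all
  have "?m1 \<noteq> ?m2" using B2_m1 in_par_through[OF l(1), of B2] by metis
  moreover have "?l \<noteq> ?m1" "?l \<noteq> ?m2" using B1 B2 in_par_through[OF l(1)] by metis+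
  moreover have "parallel Ls ?l ?m1" "parallel Ls ?m1 ?m2"
    using parallel_par_through[OF l(1)] parallel_sym parallel_trans by metis+
  ultimately have pencil: "pencil Ls ?l ?m1 ?m2" unfolding pencil_def using l(1) by simp
  have P1: "?P1 \<in> ?m1" "?P1 \<notin> ?l" "B1 \<noteq> ?P1"
    and P2: "?P2 \<in> ?m2" "?P2 \<notin> ?l" "B2 \<noteq> ?P2"
    using add_pivot_in_par_through_aux add_pivot_not_in_line add_pivot_neq_aux OI B1 B2 A by metis+
  have "A \<noteq> ?P1" "A \<noteq> ?P2" using P1(2) P2(2) A(1) by auto
  then have "line_of Ls A ?P1 = par_through Ls A (line_of Ls Oz B1)"
    "line_of Ls A ?P2 = par_through Ls A (line_of Ls Oz B2)"
    using line_of_eq[OF par_through_in in_par_through add_pivot_in_par_through] OI B1 B2 l(2)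
    by (metis line_of_in)+
  then have "parallel Ls (line_of Ls Oz B1) (line_of Ls A ?P1)"
    "parallel Ls (line_of Ls Oz B2) (line_of Ls A ?P2)"
    using parallel_sym[OF parallel_par_through] l(2) B1 B2 by (metis line_of_in)+
  moreover have B12: "B1 \<in> ?m1" "B2 \<in> ?m2" using in_par_through[OF l(1)] by blast+
  ultimately have "parallel Ls (line_of Ls B1 B2) (line_of Ls ?P1 ?P2)"
    using desargues_pencil[OF pencil l(2) A(1) A(2)[symmetric] B12(1) B1 P1(1,2,3)
        B12(2) B2 P2(1,2,3)]
    by blast
  moreover have "B \<notin> ?m1" using par_through_disjoint[OF l(1) B1] B by blast
  ultimately show ?thesis
    unfolding add_with_def
    using par_proj_change_aux[OF pencil B _ B12(1) B1 P1(1,2,3) B12(2) B2 P2(1,2,3)]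
    by blast
qed

lemma mul_with_indep_of_not_in_line_of:
  assumes OI: "Oz \<noteq> Iu" and B1: "B1 \<notin> line_of Ls Oz Iu" and B2: "B2 \<notin> line_of Ls Oz Iu"
    and A: "A \<in> line_of Ls Oz Iu" "A \<noteq> Oz" "A \<noteq> Iu" and B: "B \<in> line_of Ls Oz Iu" "B \<noteq> Oz"
    and B2_o1: "B2 \<notin> line_of Ls Oz B1"
  shows "mul_with Ls Oz Iu B1 A B = mul_with Ls Oz Iu B2 A B"
proof -
  let ?l = "line_of Ls Oz Iu"
  let ?o1 = "line_of Ls Oz B1" and ?o2 = "line_of Ls Oz B2"
  let ?P1 = "mul_pivot Ls Oz Iu B1 A" and ?P2 = "mul_pivot Ls Oz Iu B2 A"
  have l: "?l \<in> Ls" "Oz \<in> ?l" "Iu \<in> ?l" using OI by simp_all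
  have "Oz \<noteq> B1" "Oz \<noteq> B2" "Iu \<noteq> B1" "Iu \<noteq> B2" using B1 B2 l(2,3) by auto
  then have o: "?o1 \<in> Ls" "?o2 \<in> Ls" "Oz \<in> ?o1" "Oz \<in> ?o2" "B1 \<in> ?o1" "B2 \<in> ?o2" by simp_all
  have "?o1 \<noteq> ?o2" using B2_o1 o(6) by metis
  moreover have "?l \<noteq> ?o1" "?l \<noteq> ?o2" using B1 B2 o(5,6) by metis+
  ultimately have pencil: "pencil Ls ?l ?o1 ?o2" unfolding pencil_def using l o by blast
  have P1: "?P1 \<in> ?o1" "?P1 \<notin> ?l" "B1 \<noteq> ?P1"
    and P2: "?P2 \<in> ?o2" "?P2 \<notin> ?l" "B2 \<noteq> ?P2"
    using mul_pivot_in_line_of_aux mul_pivot_not_in_line mul_pivot_neq_aux OI B1 B2 A by metis+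
  have "A \<noteq> ?P1" "A \<noteq> ?P2" using P1(2) P2(2) A(1) by auto
  then have "line_of Ls A ?P1 = par_through Ls A (line_of Ls Iu B1)"
    "line_of Ls A ?P2 = par_through Ls A (line_of Ls Iu B2)"
    using line_of_eq[OF par_through_in in_par_through mul_pivot_in_par_through] OI B1 B2
      \<open>Iu \<noteq> B1\<close> \<open>Iu \<noteq> B2\<close> by (metis line_of_in)+
  then have "parallel Ls (line_of Ls Iu B1) (line_of Ls A ?P1)"
    "parallel Ls (line_of Ls Iu B2) (line_of Ls A ?P2)"
    using parallel_sym[OF parallel_par_through] \<open>Iu \<noteq> B1\<close> \<open>Iu \<noteq> B2\<close> by (metis line_of_in)+
  then have "parallel Ls (line_of Ls B1 B2) (line_of Ls ?P1 ?P2)"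
    using desargues_pencil[OF pencil l(3) A(1) A(3)[symmetric] o(5) B1 P1(1,2,3) o(6) B2 P2(1,2,3)]
    by blast
  moreover have "B \<notin> ?o1" using line_of_off_line_meets_once[OF l(1,2) B1 B(1)] B(2) by blast
  ultimately show ?thesis
    unfolding mul_with_def
    using par_proj_change_aux[OF pencil B(1) _ o(5) B1 P1(1,2,3) o(6) B2 P2(1,2,3)]
    by blast
qed

lemma add_with_indep:
  assumes OI: "Oz \<noteq> Iu" and B1: "B1 \<notin> line_of Ls Oz Iu" and B2: "B2 \<notin> line_of Ls Oz Iu"
    and A: "A \<in> line_of Ls Oz Iu" and B: "B \<in> line_of Ls Oz Iu"
  shows "add_with Ls Oz Iu B1 A B = add_with Ls Oz Iu B2 A B"
proof (cases "A = Oz")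
  case True
  then show ?thesis using add_with_zero_left OI B1 B2 B by metis
next
  case A_nz: False
  let ?l = "line_of Ls Oz Iu" and ?m1 = "par_through Ls B1 (line_of Ls Oz Iu)"
  have l: "?l \<in> Ls" using OI by simp
  note basic = add_with_indep_of_not_in_par_through[OF OI _ _ A A_nz B]
  consider "B2 \<notin> ?m1" | B3 where "B2 \<in> ?m1" "B3 \<notin> ?l" "B3 \<notin> ?m1"
    | "B2 \<in> ?m1" "\<And>Z. Z \<in> ?l \<or> Z \<in> ?m1"
    by blast
  then show ?thesis
  proof cases
    case 1
    then show ?thesis using basic B1 B2 by blast
  next
    case (2 B3)
    have "B2 \<notin> par_through Ls B3 ?l"
    proof
      assume "B2 \<in> par_through Ls B3 ?l"
      then have "par_through Ls B3 ?l = ?m1"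
        using par_through_eq[OF l] parallel_par_through[OF l] 2(1) by metis
      then show False using 2(3) in_par_through[OF l, of B3] by simp
    qed
    then show ?thesis using basic[of B1 B3] basic[of B3 B2] B1 B2 2 by simp
  next
    case 3
    then show ?thesis using add_with_indep_degenerate[OF OI B1 A A_nz B 3(1)] by blast
  qed
qed

lemma mul_with_indep_of_nontrivial:
  assumes OI: "Oz \<noteq> Iu" and B1: "B1 \<notin> line_of Ls Oz Iu" and B2: "B2 \<notin> line_of Ls Oz Iu"
    and A: "A \<in> line_of Ls Oz Iu" "A \<noteq> Oz" "A \<noteq> Iu" and B: "B \<in> line_of Ls Oz Iu" "B \<noteq> Oz"
  shows "mul_with Ls Oz Iu B1 A B = mul_with Ls Oz Iu B2 A B"
proof (cases "B2 \<in> line_of Ls Oz B1")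
  case False
  then show ?thesis using mul_with_indep_of_not_in_line_of[OF OI B1 B2 A B] by blast
next
  case True
  let ?l = "line_of Ls Oz Iu" and ?o1 = "line_of Ls Oz B1"
  have l: "?l \<in> Ls" "Oz \<in> ?l" "Iu \<in> ?l" using OI by simp_all
  have "Oz \<noteq> B1" using B1 l(2) by auto
  then have o1: "?o1 \<in> Ls" "Oz \<in> ?o1" "\<not> parallel Ls ?l ?o1"
    using not_parallel_line_of_off_line[OF l(1,2) B1] parallel_sym by auto
  have "Iu \<notin> ?o1" using line_of_off_line_meets_once[OF l(1,2) B1 l(3)] OI by blast
  then obtain B3 where B3: "B3 \<notin> ?l" "B3 \<notin> ?o1"
    using exists_point_off_crossing_lines[OF l(1) o1(1,3) l(3)] by blast
  have "Oz \<noteq> B3" "Oz \<noteq> B2" using B2 B3 l(2) by auto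
  have "B2 \<notin> line_of Ls Oz B3"
  proof
    assume "B2 \<in> line_of Ls Oz B3"
    then have "line_of Ls Oz B3 = ?o1"
      using lines_eq_if_two_common_points[OF _ o1(1) _ o1(2) _ True \<open>Oz \<noteq> B2\<close>] \<open>Oz \<noteq> B3\<close>
      by simp
    then show False using B3(2) \<open>Oz \<noteq> B3\<close> by (metis right_in_line_of)
  qed
  then show ?thesis
    using mul_with_indep_of_not_in_line_of[OF OI _ _ A B] B1 B2 B3 by metis
qed

lemma mul_with_indep:
  assumes OI: "Oz \<noteq> Iu" and B1: "B1 \<notin> line_of Ls Oz Iu" and B2: "B2 \<notin> line_of Ls Oz Iu"
    and A: "A \<in> line_of Ls Oz Iu" and B: "B \<in> line_of Ls Oz Iu"
  shows "mul_with Ls Oz Iu B1 A B = mul_with Ls Oz Iu B2 A B"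
proof -
  consider "A = Oz" | "A = Iu" | "B = Oz" | "A \<noteq> Oz" "A \<noteq> Iu" "B \<noteq> Oz" by blast
  then show ?thesis
  proof cases
    case 1
    then show ?thesis using mul_with_zero_left OI B1 B2 B by metis
  next
    case 2
    then show ?thesis using mul_with_one_left OI B1 B2 B by metis
  next
    case 3
    then show ?thesis using mul_with_zero_right OI B1 B2 by metis
  next
    case 4
    then show ?thesis using mul_with_indep_of_nontrivial[OF OI B1 B2 A _ _ B] by blast
  qed
qed

end

section \<open>Negatives, inverses and differences\<close>

context affine_incidence
begin

lemma aux_pt_not_in_line: "Oz \<noteq> Iu \<Longrightarrow> aux_pt Ls Oz Iu \<notin> line_of Ls Oz Iu"
  unfolding aux_pt_def by (rule someI_ex) (simp add: exists_point_off_line)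

context
  fixes Oz Iu :: 'p
  assumes Oz_Iu: "Oz \<noteq> Iu"
begin

lemma sf_add_in_line: "B \<in> line_of Ls Oz Iu \<Longrightarrow> sf_add Ls Oz Iu A B \<in> line_of Ls Oz Iu"
  unfolding sf_add_eq_add_with using add_with_in_line[OF Oz_Iu aux_pt_not_in_line[OF Oz_Iu]] .

lemma sf_neg_eqI: "Y \<in> line_of Ls Oz Iu \<Longrightarrow> sf_add Ls Oz Iu X Y = Oz \<Longrightarrow> sf_neg Ls Oz Iu X = Y"
  unfolding sf_neg_def sf_add_eq_add_with
  using the1_equality[OF ex1_add_with_eq_zero[OF Oz_Iu aux_pt_not_in_line[OF Oz_Iu]]] by blast

lemma sf_neg_in_line: "sf_neg Ls Oz Iu X \<in> line_of Ls Oz Iu"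
  and sf_add_neg: "sf_add Ls Oz Iu X (sf_neg Ls Oz Iu X) = Oz"
  unfolding sf_neg_def sf_add_eq_add_with
  using theI'[OF ex1_add_with_eq_zero[OF Oz_Iu aux_pt_not_in_line[OF Oz_Iu]]] by blast+

lemma sf_inv_eqI:
  "X \<in> line_of Ls Oz Iu \<Longrightarrow> X \<noteq> Oz \<Longrightarrow> Y \<in> line_of Ls Oz Iu \<Longrightarrow> sf_mul Ls Oz Iu X Y = Iu
    \<Longrightarrow> sf_inv Ls Oz Iu X = Y"
  unfolding sf_inv_def sf_mul_eq_mul_with
  using the1_equality[OF ex1_mul_with_eq_one[OF Oz_Iu aux_pt_not_in_line[OF Oz_Iu]]] by blast

lemma sf_inv_in_line: "X \<in> line_of Ls Oz Iu \<Longrightarrow> X \<noteq> Oz \<Longrightarrow> sf_inv Ls Oz Iu X \<in> line_of Ls Oz Iu"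
  and sf_mul_inv: "X \<in> line_of Ls Oz Iu \<Longrightarrow> X \<noteq> Oz \<Longrightarrow> sf_mul Ls Oz Iu X (sf_inv Ls Oz Iu X) = Iu"
  unfolding sf_inv_def sf_mul_eq_mul_with
  using theI'[OF ex1_mul_with_eq_one[OF Oz_Iu aux_pt_not_in_line[OF Oz_Iu]]] by blast+

lemma sf_sub_in_line: "sf_sub Ls Oz Iu A B \<in> line_of Ls Oz Iu"
  unfolding sf_sub_def using sf_add_in_line sf_neg_in_line by blast

lemma sf_sub_neq_zero:
  assumes "B \<in> line_of Ls Oz Iu" "C \<in> line_of Ls Oz Iu" "B \<noteq> C"
  shows "sf_sub Ls Oz Iu B C \<noteq> Oz"
proof
  assume "sf_sub Ls Oz Iu B C = Oz"
  then have "sf_add Ls Oz Iu B (sf_neg Ls Oz Iu C) = sf_add Ls Oz Iu C (sf_neg Ls Oz Iu C)"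
    unfolding sf_sub_def sf_add_neg by simp
  then have "B = C"
    unfolding sf_add_eq_add_with
    using add_with_right_cancel[OF Oz_Iu aux_pt_not_in_line[OF Oz_Iu] assms(1,2) sf_neg_in_line]
    by blast
  then show False using assms(3) by simp
qed

end

section \<open>Collineations\<close>

context
  fixes f :: "'p \<Rightarrow> 'p"
  assumes collineation: "collineation Ls f"
begin

lemma collineation_inj: "inj f"
  using collineation unfolding collineation_def bij_def by blast

lemma collineation_image_in: "l \<in> Ls \<Longrightarrow> f ` l \<in> Ls"
  using collineation unfolding collineation_def by blast

lemma collineation_mem_image_iff: "f X \<in> f ` l \<longleftrightarrow> X \<in> l"
  using collineation_inj by (rule inj_image_mem_iff)

lemma collineation_parallel_iff:
  "l \<in> Ls \<Longrightarrow> m \<in> Ls \<Longrightarrow> parallel Ls (f ` l) (f ` m) \<longleftrightarrow> parallel Ls l m"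
  unfolding parallel_def
  using collineation_image_in inj_image_eq_iff[OF collineation_inj] image_Int[OF collineation_inj]
  by (metis image_is_empty)

lemma collineation_line_of: "P \<noteq> Q \<Longrightarrow> f ` line_of Ls P Q = line_of Ls (f P) (f Q)"
  using line_of_eq[OF collineation_image_in] inj_eq[OF collineation_inj]
  by (metis imageI line_of_in left_in_line_of right_in_line_of)

lemma collineation_par_through: "l \<in> Ls \<Longrightarrow> f ` par_through Ls P l = par_through Ls (f P) (f ` l)"
  using par_through_eq[OF collineation_image_in] collineation_parallel_iff collineation_image_in
  by (metis imageI in_par_through par_through_in parallel_par_through)

lemma collineation_meet:
  assumes "l \<in> Ls" "m \<in> Ls" "\<not> parallel Ls l m"
  shows "f (meet l m) = meet (f ` l) (f ` m)"
proof -
  have "f ` l \<noteq> f ` m"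
  proof
    assume "f ` l = f ` m"
    then have "l = m" using inj_image_eq_iff[OF collineation_inj] by blast
    then show False using assms(3) parallel_refl[OF assms(1)] by simp
  qed
  then show ?thesis
    using meet_eq[OF collineation_image_in[OF assms(1)] collineation_image_in[OF assms(2)] _
        imageI[OF meet_in(1)[OF assms]] imageI[OF meet_in(2)[OF assms]]]
    by simp
qed

lemma collineation_par_proj:
  assumes "l \<in> Ls" "d \<in> Ls" "\<not> parallel Ls l d"
  shows "f (par_proj Ls l d P) = par_proj Ls (f ` l) (f ` d) (f P)"
  unfolding par_proj_def
  using collineation_meet[OF assms(1) par_through_in[OF assms(2)]
      not_parallel_par_through[OF assms(2,3)]]
  by (simp add: collineation_par_through[OF assms(2)])

lemma collineation_add_with:
  assumes OI: "Oz \<noteq> Iu" and B1: "B1 \<notin> line_of Ls Oz Iu" and B: "B \<in> line_of Ls Oz Iu"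
  shows "f (add_with Ls Oz Iu B1 A B) = add_with Ls (f Oz) (f Iu) (f B1) (f A) (f B)"
proof -
  have "Oz \<noteq> B1" "B \<noteq> B1" using OI B1 B by auto
  have "f (add_pivot Ls Oz Iu B1 A) = add_pivot Ls (f Oz) (f Iu) (f B1) (f A)"
    unfolding add_pivot_def collineation_par_proj[OF add_pivot_frame[OF OI B1]]
    by (simp add: collineation_par_through collineation_line_of OI \<open>Oz \<noteq> B1\<close>)
  moreover have "\<not> parallel Ls (line_of Ls Oz Iu) (line_of Ls B B1)"
    using not_parallel_line_of_off_line[OF _ B B1] parallel_sym OI by auto
  ultimately show ?thesis
    unfolding add_with_def
    by (simp add: collineation_par_proj[OF line_of_in[OF OI] line_of_in[OF \<open>B \<noteq> B1\<close>]]
        collineation_line_of OI \<open>B \<noteq> B1\<close>)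
qed

lemma collineation_mul_with:
  assumes OI: "Oz \<noteq> Iu" and B1: "B1 \<notin> line_of Ls Oz Iu" and B: "B \<in> line_of Ls Oz Iu"
  shows "f (mul_with Ls Oz Iu B1 A B) = mul_with Ls (f Oz) (f Iu) (f B1) (f A) (f B)"
proof -
  have "Oz \<noteq> B1" "Iu \<noteq> B1" "B \<noteq> B1" using OI B1 B by auto
  have "f (mul_pivot Ls Oz Iu B1 A) = mul_pivot Ls (f Oz) (f Iu) (f B1) (f A)"
    unfolding mul_pivot_def collineation_par_proj[OF mul_pivot_frame[OF OI B1]]
    by (simp add: collineation_line_of \<open>Oz \<noteq> B1\<close> \<open>Iu \<noteq> B1\<close>)
  moreover have "\<not> parallel Ls (line_of Ls Oz Iu) (line_of Ls B B1)"
    using not_parallel_line_of_off_line[OF _ B B1] parallel_sym OI by auto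
  ultimately show ?thesis
    unfolding mul_with_def
    by (simp add: collineation_par_proj[OF line_of_in[OF OI] line_of_in[OF \<open>B \<noteq> B1\<close>]]
        collineation_line_of OI \<open>B \<noteq> B1\<close>)
qed

end

end

context desarguesian_plane
begin

context
  fixes f :: "'p \<Rightarrow> 'p" and Oz Iu :: 'p
  assumes collineation: "collineation Ls f" and Oz_Iu: "Oz \<noteq> Iu"
begin

private lemma image_frame:
  "f Oz \<noteq> f Iu" "f ` line_of Ls Oz Iu = line_of Ls (f Oz) (f Iu)"
  "X \<in> line_of Ls Oz Iu \<Longrightarrow> f X \<in> line_of Ls (f Oz) (f Iu)"
  "X \<notin> line_of Ls Oz Iu \<Longrightarrow> f X \<notin> line_of Ls (f Oz) (f Iu)"
proof -
  show "f Oz \<noteq> f Iu" using Oz_Iu inj_eq[OF collineation_inj[OF collineation]] by simp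
  show eq: "f ` line_of Ls Oz Iu = line_of Ls (f Oz) (f Iu)"
    using collineation_line_of[OF collineation Oz_Iu] .
  show "X \<in> line_of Ls Oz Iu \<Longrightarrow> f X \<in> line_of Ls (f Oz) (f Iu)"
    "X \<notin> line_of Ls Oz Iu \<Longrightarrow> f X \<notin> line_of Ls (f Oz) (f Iu)"
    unfolding eq[symmetric] collineation_mem_image_iff[OF collineation] by simp_all
qed

lemma collineation_sf_add:
  assumes "A \<in> line_of Ls Oz Iu" "B \<in> line_of Ls Oz Iu"
  shows "f (sf_add Ls Oz Iu A B) = sf_add Ls (f Oz) (f Iu) (f A) (f B)"
  unfolding sf_add_eq_add_with
    collineation_add_with[OF collineation Oz_Iu aux_pt_not_in_line[OF Oz_Iu] assms(2)]
  using add_with_indep[OF image_frame(1) image_frame(4)[OF aux_pt_not_in_line[OF Oz_Iu]]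
      aux_pt_not_in_line[OF image_frame(1)] image_frame(3)[OF assms(1)]
      image_frame(3)[OF assms(2)]] .

lemma collineation_sf_mul:
  assumes "A \<in> line_of Ls Oz Iu" "B \<in> line_of Ls Oz Iu"
  shows "f (sf_mul Ls Oz Iu A B) = sf_mul Ls (f Oz) (f Iu) (f A) (f B)"
  unfolding sf_mul_eq_mul_with
    collineation_mul_with[OF collineation Oz_Iu aux_pt_not_in_line[OF Oz_Iu] assms(2)]
  using mul_with_indep[OF image_frame(1) image_frame(4)[OF aux_pt_not_in_line[OF Oz_Iu]]
      aux_pt_not_in_line[OF image_frame(1)] image_frame(3)[OF assms(1)]
      image_frame(3)[OF assms(2)]] .

lemma collineation_sf_neg:
  assumes "X \<in> line_of Ls Oz Iu"
  shows "f (sf_neg Ls Oz Iu X) = sf_neg Ls (f Oz) (f Iu) (f X)"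
proof -
  have "sf_add Ls (f Oz) (f Iu) (f X) (f (sf_neg Ls Oz Iu X)) = f Oz"
    using collineation_sf_add[OF assms sf_neg_in_line[OF Oz_Iu, of X]] sf_add_neg[OF Oz_Iu, of X]
    by simp
  then show ?thesis
    using sf_neg_eqI[OF image_frame(1) image_frame(3)[OF sf_neg_in_line[OF Oz_Iu]]] by simp
qed

lemma collineation_sf_inv:
  assumes "X \<in> line_of Ls Oz Iu" "X \<noteq> Oz"
  shows "f (sf_inv Ls Oz Iu X) = sf_inv Ls (f Oz) (f Iu) (f X)"
proof -
  have "sf_mul Ls (f Oz) (f Iu) (f X) (f (sf_inv Ls Oz Iu X)) = f Iu"
    using collineation_sf_mul[OF assms(1) sf_inv_in_line[OF Oz_Iu assms]] sf_mul_inv[OF Oz_Iu assms]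
    by simp
  moreover have "f X \<noteq> f Oz" using assms(2) inj_eq[OF collineation_inj[OF collineation]] by simp
  ultimately show ?thesis
    using sf_inv_eqI[OF image_frame(1) image_frame(3)[OF assms(1)] _
        image_frame(3)[OF sf_inv_in_line[OF Oz_Iu assms]]] by simp
qed

lemma collineation_sf_sub:
  assumes "A \<in> line_of Ls Oz Iu" "B \<in> line_of Ls Oz Iu"
  shows "f (sf_sub Ls Oz Iu A B) = sf_sub Ls (f Oz) (f Iu) (f A) (f B)"
  unfolding sf_sub_def collineation_sf_add[OF assms(1) sf_neg_in_line[OF Oz_Iu]]
    collineation_sf_neg[OF assms(2)] ..

lemma collineation_ratio:
  assumes "A \<in> line_of Ls Oz Iu" "B \<in> line_of Ls Oz Iu" "C \<in> line_of Ls Oz Iu" "B \<noteq> C"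
  shows "f (ratio Ls Oz Iu A B C) = ratio Ls (f Oz) (f Iu) (f A) (f B) (f C)"
proof -
  have "sf_sub Ls Oz Iu B C \<noteq> Oz" using sf_sub_neq_zero[OF Oz_Iu assms(2-4)] .
  then show ?thesis
    unfolding ratio_def
    by (simp add: collineation_sf_mul sf_inv_in_line sf_sub_in_line collineation_sf_inv
        collineation_sf_sub assms Oz_Iu)
qed

end

end

theorem mainTheorem13:
  fixes Ls :: "'p set set" and Oz Iu A B C :: 'p and \<delta> :: "'p \<Rightarrow> 'p"
  assumes "desargues_affine_plane Ls"
    and "Oz \<noteq> Iu"
    and "dilatation Ls \<delta>"
    and "A \<in> line_of Ls Oz Iu" and "B \<in> line_of Ls Oz Iu" and "C \<in> line_of Ls Oz Iu"
    and "B \<noteq> C"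
  shows "\<delta> (ratio Ls Oz Iu A B C) = ratio Ls (\<delta> Oz) (\<delta> Iu) (\<delta> A) (\<delta> B) (\<delta> C)"
proof -
  interpret desarguesian_plane Ls
    using assms(1) unfolding desargues_affine_plane_def by unfold_locales auto
  have "collineation Ls \<delta>" using assms(3) unfolding dilatation_def by blast
  then show ?thesis using collineation_ratio assms(2,4-7) by blast
qed

end
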